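(* For every $N\ge 3$, $\mathbb{E}[\mathcal{N}_1(N)^3]=\frac{N^2(N+1)}{8}$ and the third cumulant vanishes: $\mathbb{E}\big[(\mathcal{N}_1(N)-N/2)^3\big]=0$. For every $N\ge 5$, $$\mathbb{E}[\mathcal{N}_1(N)^4]=\frac{N(15N^3+30N^2+5N-2)}{240},$$ and the fourth cumulant of $\mathcal{N}_1(N)$ equals $-N/120$.
   Context: A random recursive hypergraph (RRH) is the random hypergraph process defined as follows. At size $N=1$ it has vertex set $\{v_1\}$ and edge set $\{\{v_1\}\}$. Given the hypergraph of size $N$ (vertices $v_1,\dots,v_N$, exactly $N$ edges), one chooses an existing edge $e$ uniformly at random, independently of the past, and adds a new vertex $v_{N+1}$ together with the new edge $e\cup\{v_{N+1}\}$. The degree of a vertex is the number of edges containing it. $\mathcal{N}_k(N)$ denotes the number of vertices of degree $k$ in the RRH of size $N$. The fourth cumulant of a random variable $X$ with mean $\mu$ is $\mathbb{E}[(X-\mu)^4]-3\operatorname{Var}[X]^2$. *)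

theory Defs
  imports "HOL-Probability.Probability"
begin

text \<open>A hypergraph of the RRH process is represented by its list of edges (each a set of
vertices). The RRH of size N has vertices 0, ..., N-1 (vertex v_i is i-1) and N edges.\<close>

type_synonym hgraph = "nat set list"

fun rrh :: "nat \<Rightarrow> hgraph pmf" where
  "rrh 0 = return_pmf []"
| "rrh (Suc 0) = return_pmf [{0}]"
| "rrh (Suc (Suc n)) =
     rrh (Suc n) \<bind> (\<lambda>es. map_pmf (\<lambda>i. es @ [(es ! i) \<union> {Suc n}]) (pmf_of_set {..<length es}))"

definition degree :: "hgraph \<Rightarrow> nat \<Rightarrow> nat" where
  "degree es v = length (filter (\<lambda>e. v \<in> e) es)"

definition numdeg :: "nat \<Rightarrow> nat \<Rightarrow> hgraph \<Rightarrow> nat" where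
  "numdeg N k es = card {v. v < N \<and> degree es v = k}"

definition fourth_cumulant :: "'a pmf \<Rightarrow> ('a \<Rightarrow> real) \<Rightarrow> real" where
  "fourth_cumulant p X =
     measure_pmf.expectation p (\<lambda>x. (X x - measure_pmf.expectation p X) ^ 4)
     - 3 * (measure_pmf.variance p X)\<^sup>2"

end

theory Submission
  imports Defs
begin

text \<open>
  Call vertex i's own edge the edge created together with it. Every other vertex of that edge
  already lies in an older edge, so the only possible leaf (vertex of degree 1) on it is i itself.
  Hence attaching the new vertex to edge i creates one new leaf and destroys one exactly when i
  is a leaf: the leaf count X_N is a Markov chain with X_{N+1} = X_N with probability X_N / N
  and X_{N+1} = X_N + 1 otherwise. Taking expectations of powers gives linear recursions for the
  moments E[X_N^k], k \<le> 4, which are solved by induction; the cumulants are polynomial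
  combinations of these moments.
\<close>

lemma length_rrh: "es \<in> set_pmf (rrh N) \<Longrightarrow> length es = N"
  by (induction N arbitrary: es rule: rrh.induct) (auto simp: set_bind_pmf)

lemma finite_set_pmf_rrh: "finite (set_pmf (rrh N))"
proof (induction N rule: rrh.induct)
  case (3 n)
  have "finite (set_pmf (pmf_of_set {..<length es}))" if "es \<in> set_pmf (rrh (Suc n))" for es
    using length_rrh[OF that] by (subst set_pmf_of_set) auto
  then show ?case using 3 by (auto simp: set_bind_pmf)
qed auto

lemma degree_append: "degree (es @ [e]) v = degree es v + (if v \<in> e then 1 else 0)"
  by (simp add: degree_def)

lemma degree_ge_1: "j < length es \<Longrightarrow> v \<in> es ! j \<Longrightarrow> 1 \<le> degree es v"
  by (auto simp: degree_def Suc_le_eq filter_empty_conv length_greater_0_conv)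

definition rooted_hgraph :: "nat \<Rightarrow> hgraph \<Rightarrow> bool" where
  "rooted_hgraph N es \<longleftrightarrow> length es = N \<and>
     (\<forall>i<N. i \<in> es ! i \<and> es ! i \<subseteq> {..<N}
             \<and> (\<forall>v \<in> es ! i. v \<noteq> i \<longrightarrow> 2 \<le> degree es v))"

lemma rooted_hgraph_append:
  assumes G: "rooted_hgraph N es" and i: "i < N"
  shows "rooted_hgraph (Suc N) (es @ [es ! i \<union> {N}])"
  unfolding rooted_hgraph_def
proof (intro conjI allI impI ballI)
  have len: "length es = N" using G by (simp add: rooted_hgraph_def)
  then show "length (es @ [es ! i \<union> {N}]) = Suc N" by simp
  fix j assume j: "j < Suc N"
  show "j \<in> (es @ [es ! i \<union> {N}]) ! j"
    using G j len by (cases "j < N") (auto simp: rooted_hgraph_def nth_append)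
  have "es ! j \<subseteq> {..<N}" if "j < N" for j using G that by (simp add: rooted_hgraph_def)
  then show "(es @ [es ! i \<union> {N}]) ! j \<subseteq> {..<Suc N}"
    using i j len by (cases "j < N") (fastforce simp: nth_append)+
  fix v assume v: "v \<in> (es @ [es ! i \<union> {N}]) ! j" "v \<noteq> j"
  show "2 \<le> degree (es @ [es ! i \<union> {N}]) v"
  proof (cases "j < N")
    case True
    then have "2 \<le> degree es v" using G v len by (auto simp: rooted_hgraph_def nth_append)
    then show ?thesis by (simp add: degree_append)
  next
    case False
    then have "v \<in> es ! i" using v j len by (simp add: nth_append)
    moreover from this have "1 \<le> degree es v" using degree_ge_1 i len by blast
    ultimately show ?thesis by (simp add: degree_append)
  qed
qed

lemma rooted_hgraph_rrh: "es \<in> set_pmf (rrh N) \<Longrightarrow> rooted_hgraph N es"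
proof (induction N arbitrary: es rule: rrh.induct)
  case 1
  then show ?case by (simp add: rooted_hgraph_def)
next
  case 2
  then show ?case by (auto simp: rooted_hgraph_def degree_def)
next
  case (3 n)
  then obtain es0 i where es0: "es0 \<in> set_pmf (rrh (Suc n))" and i: "i < length es0"
    and es: "es = es0 @ [es0 ! i \<union> {Suc n}]"
    by (auto simp: set_bind_pmf set_pmf_of_set length_rrh lessThan_empty_iff)
  then show ?case using 3 rooted_hgraph_append length_rrh by simp
qed

lemma degree_fresh_vertex: "rooted_hgraph N es \<Longrightarrow> degree es N = 0"
  by (fastforce simp: rooted_hgraph_def degree_def filter_empty_conv in_set_conv_nth)

lemma numdeg_le: "numdeg N k es \<le> N"
  unfolding numdeg_def by (rule order.trans[OF card_mono[of "{..<N}"]]) auto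

lemma numdeg_1_append:
  assumes G: "rooted_hgraph N es" and i: "i < N"
  shows "numdeg (Suc N) 1 (es @ [es ! i \<union> {N}]) =
           (if degree es i = 1 then numdeg N 1 es else Suc (numdeg N 1 es))"
proof -
  define L where "L = {v. v < N \<and> degree es v = 1}"
  have len: "length es = N" and own: "i \<in> es ! i" and sub: "es ! i \<subseteq> {..<N}"
    and others: "\<And>v. v \<in> es ! i \<Longrightarrow> v \<noteq> i \<Longrightarrow> 2 \<le> degree es v"
    using G i by (auto simp: rooted_hgraph_def)
  have "1 \<le> degree es i" using degree_ge_1 own i len by blast
  then have leaf_off_edge: "degree es v = 1 \<Longrightarrow> v \<noteq> i \<Longrightarrow> v \<notin> es ! i" for v
    using others by fastforce
  have "{v. v < Suc N \<and> degree (es @ [es ! i \<union> {N}]) v = 1} = insert N (L - {i})"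
    using \<open>1 \<le> degree es i\<close> others sub own leaf_off_edge degree_fresh_vertex[OF G]
    by (auto simp: L_def degree_append less_Suc_eq; fastforce)
  then have "numdeg (Suc N) 1 (es @ [es ! i \<union> {N}]) = Suc (card (L - {i}))"
    by (simp add: numdeg_def L_def)
  moreover have "numdeg N 1 es = card L" by (simp add: numdeg_def L_def)
  moreover have "i \<in> L \<longleftrightarrow> degree es i = 1" using i by (simp add: L_def)
  moreover have "finite L" by (simp add: L_def)
  ultimately show ?thesis
    by (cases "i \<in> L") (simp_all add: card_Suc_Diff1 del: card_Diff_insert)
qed

lemma sum_numdeg_1_append:
  fixes f :: "nat \<Rightarrow> real"
  assumes G: "rooted_hgraph N es"
  defines "X \<equiv> numdeg N 1 es"
  shows "(\<Sum>i<N. f (numdeg (Suc N) 1 (es @ [es ! i \<union> {N}])))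
           = real X * f X + (real N - real X) * f (Suc X)"
proof -
  define L where "L = {..<N} \<inter> {i. degree es i = 1}"
  have card_L: "card L = X" unfolding X_def numdeg_def L_def by (rule arg_cong[where f = card]) auto
  have non_leaves: "{..<N} \<inter> - {i. degree es i = 1} = {..<N} - L" by (auto simp: L_def)
  have "(\<Sum>i<N. f (numdeg (Suc N) 1 (es @ [es ! i \<union> {N}])))
          = (\<Sum>i<N. if degree es i = 1 then f X else f (Suc X))"
    using numdeg_1_append[OF G] by (intro sum.cong) (auto simp: X_def)
  also have "\<dots> = real (card L) * f X + real (card ({..<N} - L)) * f (Suc X)"
    unfolding sum.If_cases[OF finite_lessThan] non_leaves L_def[symmetric] by simp
  also have "card ({..<N} - L) = N - X"
    using card_L by (subst card_Diff_subset) (auto simp: L_def)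
  finally show ?thesis using numdeg_le[of N 1 es] card_L by (simp add: X_def of_nat_diff)
qed

lemma expectation_rrh_Suc:
  fixes f :: "nat \<Rightarrow> real"
  assumes "1 \<le> N"
  shows "measure_pmf.expectation (rrh (Suc N)) (\<lambda>H. f (numdeg (Suc N) 1 H)) =
    measure_pmf.expectation (rrh N) (\<lambda>H. (real (numdeg N 1 H) * f (numdeg N 1 H)
      + (real N - real (numdeg N 1 H)) * f (Suc (numdeg N 1 H))) / real N)"
    (is "_ = measure_pmf.expectation _ ?g")
proof -
  obtain n where n: "N = Suc n" using assms by (cases N) auto
  let ?step = "\<lambda>es. map_pmf (\<lambda>i. es @ [es ! i \<union> {N}]) (pmf_of_set {..<length es})"
  have finite_step: "finite (set_pmf (?step es))" if "es \<in> set_pmf (rrh N)" for es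
    using length_rrh[OF that] n by (auto simp: set_pmf_of_set lessThan_empty_iff)
  have step: "measure_pmf.expectation (?step es) (\<lambda>H. f (numdeg (Suc N) 1 H)) = ?g es"
    if "es \<in> set_pmf (rrh N)" for es
    using sum_numdeg_1_append[OF rooted_hgraph_rrh[OF that], of f] length_rrh[OF that] n
    by (simp add: integral_pmf_of_set lessThan_empty_iff)
  have "measure_pmf.expectation (rrh (Suc N)) (\<lambda>H. f (numdeg (Suc N) 1 H))
      = (\<Sum>es\<in>set_pmf (rrh N). pmf (rrh N) es *\<^sub>R
           measure_pmf.expectation (?step es) (\<lambda>H. f (numdeg (Suc N) 1 H)))"
    unfolding n rrh.simps
    by (rule pmf_expectation_bind) (use finite_step finite_set_pmf_rrh n in auto)
  also have "\<dots> = (\<Sum>es\<in>set_pmf (rrh N). pmf (rrh N) es *\<^sub>R ?g es)"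
    using step by simp
  also have "\<dots> = measure_pmf.expectation (rrh N) ?g"
    by (rule integral_measure_pmf[symmetric]) (use finite_set_pmf_rrh in auto)
  finally show ?thesis .
qed

lemma leaf_step_polynomial:
  fixes x n :: "'a::field"
  assumes "n \<noteq> 0"
  shows "(x * x ^ k + (n - x) * (x + 1) ^ k) / n
           = (\<Sum>j\<le>k. of_nat (k choose j) * x ^ j)
             - (\<Sum>j<k. of_nat (k choose j) * x ^ Suc j) / n"
proof -
  have binom: "(x + 1) ^ k = (\<Sum>j\<le>k. of_nat (k choose j) * x ^ j)"
    using binomial_ring[of x 1 k] by (simp add: mult_ac)
  have "x * (x + 1) ^ k = (\<Sum>j<k. of_nat (k choose j) * x ^ Suc j) + x * x ^ k"
    unfolding binom sum_distrib_left by (simp add: lessThan_Suc_atMost[symmetric] mult_ac)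
  then show ?thesis
    using assms unfolding binom[symmetric] by (simp add: field_simps)
qed

definition leaf_moment :: "nat \<Rightarrow> nat \<Rightarrow> real" where
  "leaf_moment k N = measure_pmf.expectation (rrh N) (\<lambda>H. real (numdeg N 1 H) ^ k)"

lemma leaf_moment_Suc:
  assumes "1 \<le> N"
  shows "leaf_moment k (Suc N) = (\<Sum>j\<le>k. of_nat (k choose j) * leaf_moment j N)
           - (\<Sum>j<k. of_nat (k choose j) * leaf_moment (Suc j) N) / N"
proof -
  let ?X = "\<lambda>H. real (numdeg N 1 H)"
  have "leaf_moment k (Suc N)
          = measure_pmf.expectation (rrh N)
              (\<lambda>H. (?X H * ?X H ^ k + (N - ?X H) * (?X H + 1) ^ k) / N)"
    unfolding leaf_moment_def using expectation_rrh_Suc[OF assms, of "\<lambda>n. real n ^ k"]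
    by (simp only: of_nat_Suc add.commute[of 1])
  also have "\<dots> = measure_pmf.expectation (rrh N) (\<lambda>H. (\<Sum>j\<le>k. of_nat (k choose j) * ?X H ^ j)
                    - (\<Sum>j<k. of_nat (k choose j) * ?X H ^ Suc j) / N)"
    using assms by (simp add: leaf_step_polynomial)
  also have "\<dots> = (\<Sum>j\<le>k. of_nat (k choose j) * leaf_moment j N)
                   - (\<Sum>j<k. of_nat (k choose j) * leaf_moment (Suc j) N) / N"
    by (simp add: leaf_moment_def finite_set_pmf_rrh integrable_measure_pmf_finite
        Bochner_Integration.integral_sum)
  finally show ?thesis .
qed

lemma leaf_moment_0: "leaf_moment 0 N = 1"
  by (simp add: leaf_moment_def)

lemma leaf_moment_recurrences:
  assumes N: "1 \<le> N"
  defines "m \<equiv> \<lambda>k. leaf_moment k N"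
  shows "leaf_moment 1 (Suc N) = (1 - 1/N) * m 1 + 1"
    and "leaf_moment 2 (Suc N) = (1 - 2/N) * m 2 + (2 - 1/N) * m 1 + 1"
    and "leaf_moment 3 (Suc N) = (1 - 3/N) * m 3 + (3 - 3/N) * m 2 + (3 - 1/N) * m 1 + 1"
    and "leaf_moment 4 (Suc N)
           = (1 - 4/N) * m 4 + (4 - 6/N) * m 3 + (6 - 4/N) * m 2 + (4 - 1/N) * m 1 + 1"
  unfolding m_def leaf_moment_Suc[OF N]
  by (simp_all add: numeral_eq_Suc leaf_moment_0 add_divide_distrib algebra_simps)

lemma rrh_2: "rrh 2 = return_pmf [{0}, {0, 1}]"
  by (simp add: numeral_2_eq_2 lessThan_Suc bind_return_pmf pmf_of_set_singleton map_return_pmf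
      insert_commute)

lemma leaf_moment_2: "leaf_moment k 2 = 1"
proof -
  have "{v. v < 2 \<and> degree [{0}, {0, 1}] v = 1} = {1}"
    by (auto simp: degree_def less_2_cases_iff)
  then show ?thesis by (simp add: leaf_moment_def rrh_2 numdeg_def)
qed

lemma leaf_moment_1_closed: "2 \<le> N \<Longrightarrow> leaf_moment 1 N = real N / 2"
proof (induction N rule: nat_induct_at_least)
  case (Suc n)
  have "leaf_moment 1 (Suc n) = (1 - 1/n) * leaf_moment 1 n + 1"
    using leaf_moment_recurrences(1)[of n] Suc.hyps by simp
  also have "\<dots> = real (Suc n) / 2"
    using Suc.hyps unfolding Suc.IH by (simp add: field_simps)
  finally show ?case .
qed (simp add: leaf_moment_2)

lemma leaf_moment_2_closed: "3 \<le> N \<Longrightarrow> leaf_moment 2 N = real N * (3 * real N + 1) / 12"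
proof (induction N rule: nat_induct_at_least)
  case base
  show ?case using leaf_moment_recurrences(2)[of 2] by (simp add: leaf_moment_2)
next
  case (Suc n)
  have m1: "leaf_moment 1 n = real n / 2" using Suc.hyps leaf_moment_1_closed by simp
  have "leaf_moment 2 (Suc n) = (1 - 2/n) * leaf_moment 2 n + (2 - 1/n) * leaf_moment 1 n + 1"
    using leaf_moment_recurrences(2)[of n] Suc.hyps by simp
  also have "\<dots> = real (Suc n) * (3 * real (Suc n) + 1) / 12"
    using Suc.hyps unfolding Suc.IH m1 by (simp add: field_simps)
  finally show ?case .
qed

lemma leaf_moment_3_closed: "3 \<le> N \<Longrightarrow> leaf_moment 3 N = real N ^ 2 * (real N + 1) / 8"
proof (induction N rule: nat_induct_at_least)
  case base
  show ?case using leaf_moment_recurrences(3)[of 2] by (simp add: leaf_moment_2)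
next
  case (Suc n)
  have m1: "leaf_moment 1 n = real n / 2" using Suc.hyps leaf_moment_1_closed by simp
  have m2: "leaf_moment 2 n = real n * (3 * real n + 1) / 12"
    using Suc.hyps leaf_moment_2_closed by simp
  have "leaf_moment 3 (Suc n) = (1 - 3/n) * leaf_moment 3 n + (3 - 3/n) * leaf_moment 2 n
          + (3 - 1/n) * leaf_moment 1 n + 1"
    using leaf_moment_recurrences(3)[of n] Suc.hyps by simp
  also have "\<dots> = real (Suc n) ^ 2 * (real (Suc n) + 1) / 8"
    using Suc.hyps unfolding Suc.IH m1 m2 by (simp add: field_simps power2_eq_square)
  finally show ?case .
qed

lemma leaf_moment_4_closed:
  "5 \<le> N \<Longrightarrow>
     leaf_moment 4 N = real N * (15 * real N ^ 3 + 30 * real N ^ 2 + 5 * real N - 2) / 240"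
proof (induction N rule: nat_induct_at_least)
  case base
  note lower = leaf_moment_1_closed leaf_moment_2_closed leaf_moment_3_closed
  have "leaf_moment 4 3 = 17/2"
    using leaf_moment_recurrences(4)[of 2] by (simp add: leaf_moment_2)
  then have "leaf_moment 4 4 = 73/3"
    using leaf_moment_recurrences(4)[of 3] lower[of 3] by simp
  then show ?case
    using leaf_moment_recurrences(4)[of 4] lower[of 4] by simp
next
  case (Suc n)
  have m1: "leaf_moment 1 n = real n / 2" using Suc.hyps leaf_moment_1_closed by simp
  have m2: "leaf_moment 2 n = real n * (3 * real n + 1) / 12"
    using Suc.hyps leaf_moment_2_closed by simp
  have m3: "leaf_moment 3 n = real n ^ 2 * (real n + 1) / 8"
    using Suc.hyps leaf_moment_3_closed by simp
  have "leaf_moment 4 (Suc n) = (1 - 4/n) * leaf_moment 4 n + (4 - 6/n) * leaf_moment 3 n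
          + (6 - 4/n) * leaf_moment 2 n + (4 - 1/n) * leaf_moment 1 n + 1"
    using leaf_moment_recurrences(4)[of n] Suc.hyps by simp
  also have "\<dots> = real (Suc n)
      * (15 * real (Suc n) ^ 3 + 30 * real (Suc n) ^ 2 + 5 * real (Suc n) - 2) / 240"
    using Suc.hyps unfolding Suc.IH m1 m2 m3
    by (simp add: field_simps power2_eq_square power3_eq_cube)
  finally show ?case .
qed

lemma expectation_power_diff:
  fixes p :: "'a pmf" and X :: "'a \<Rightarrow> real"
  assumes "finite (set_pmf p)"
  shows "measure_pmf.expectation p (\<lambda>x. (X x - c) ^ k)
           = (\<Sum>j\<le>k. of_nat (k choose j) * (- c) ^ (k - j)
                         * measure_pmf.expectation p (\<lambda>x. X x ^ j))"
proof -
  have "(X x - c) ^ k = (\<Sum>j\<le>k. of_nat (k choose j) * (- c) ^ (k - j) * X x ^ j)" for x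
    using binomial_ring[of "X x" "- c" k] by (simp add: mult_ac)
  then show ?thesis
    using assms by (simp add: Bochner_Integration.integral_sum integrable_measure_pmf_finite)
qed

lemma expectation_leaf_power_diff:
  "measure_pmf.expectation (rrh N) (\<lambda>H. (real (numdeg N 1 H) - c) ^ k)
     = (\<Sum>j\<le>k. of_nat (k choose j) * (- c) ^ (k - j) * leaf_moment j N)"
  unfolding leaf_moment_def by (rule expectation_power_diff[OF finite_set_pmf_rrh])

lemma expectation_leaf_square_diff:
  "measure_pmf.expectation (rrh N) (\<lambda>H. (real (numdeg N 1 H) - c) ^ 2)
     = leaf_moment 2 N - 2 * c * leaf_moment 1 N + c ^ 2"
  unfolding expectation_leaf_power_diff by (simp add: numeral_eq_Suc leaf_moment_0 algebra_simps)

lemma expectation_leaf_cube_diff: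
  "measure_pmf.expectation (rrh N) (\<lambda>H. (real (numdeg N 1 H) - c) ^ 3)
     = leaf_moment 3 N - 3 * c * leaf_moment 2 N + 3 * c ^ 2 * leaf_moment 1 N - c ^ 3"
  unfolding expectation_leaf_power_diff by (simp add: numeral_eq_Suc leaf_moment_0 algebra_simps)

lemma expectation_leaf_fourth_power_diff:
  "measure_pmf.expectation (rrh N) (\<lambda>H. (real (numdeg N 1 H) - c) ^ 4)
     = leaf_moment 4 N - 4 * c * leaf_moment 3 N + 6 * c ^ 2 * leaf_moment 2 N
       - 4 * c ^ 3 * leaf_moment 1 N + c ^ 4"
  unfolding expectation_leaf_power_diff by (simp add: numeral_eq_Suc leaf_moment_0 algebra_simps)

theorem mainTheorem3:
  shows "(\<forall>N::nat. N \<ge> 3 \<longrightarrow>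
            measure_pmf.expectation (rrh N) (\<lambda>H. real (numdeg N 1 H) ^ 3)
              = real N ^ 2 * (real N + 1) / 8
          \<and> measure_pmf.expectation (rrh N) (\<lambda>H. (real (numdeg N 1 H) - real N / 2) ^ 3) = 0)
       \<and> (\<forall>N::nat. N \<ge> 5 \<longrightarrow>
            measure_pmf.expectation (rrh N) (\<lambda>H. real (numdeg N 1 H) ^ 4)
              = real N * (15 * real N ^ 3 + 30 * real N ^ 2 + 5 * real N - 2) / 240
          \<and> fourth_cumulant (rrh N) (\<lambda>H. real (numdeg N 1 H)) = - real N / 120)"
proof (intro conjI allI impI)
  fix N :: nat assume N: "3 \<le> N"
  have m1: "leaf_moment 1 N = real N / 2" using N leaf_moment_1_closed by simp
  note moments = m1 leaf_moment_2_closed[OF N] leaf_moment_3_closed[OF N]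
  show "measure_pmf.expectation (rrh N) (\<lambda>H. real (numdeg N 1 H) ^ 3)
          = real N ^ 2 * (real N + 1) / 8"
    using moments(3) by (simp add: leaf_moment_def)
  show "measure_pmf.expectation (rrh N) (\<lambda>H. (real (numdeg N 1 H) - real N / 2) ^ 3) = 0"
    unfolding expectation_leaf_cube_diff moments
    by (simp add: field_simps power2_eq_square power3_eq_cube)
next
  fix N :: nat assume N: "5 \<le> N"
  have m1: "leaf_moment 1 N = real N / 2" using N leaf_moment_1_closed by simp
  have m2: "leaf_moment 2 N = real N * (3 * real N + 1) / 12"
    using N leaf_moment_2_closed by simp
  have m3: "leaf_moment 3 N = real N ^ 2 * (real N + 1) / 8" using N leaf_moment_3_closed by simp
  note moments = m1 m2 m3 leaf_moment_4_closed[OF N]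
  have mean: "measure_pmf.expectation (rrh N) (\<lambda>H. real (numdeg N 1 H)) = real N / 2"
    using m1 by (simp add: leaf_moment_def)
  show "measure_pmf.expectation (rrh N) (\<lambda>H. real (numdeg N 1 H) ^ 4)
          = real N * (15 * real N ^ 3 + 30 * real N ^ 2 + 5 * real N - 2) / 240"
    using moments(4) by (simp add: leaf_moment_def)
  show "fourth_cumulant (rrh N) (\<lambda>H. real (numdeg N 1 H)) = - real N / 120"
    unfolding fourth_cumulant_def mean expectation_leaf_fourth_power_diff
      expectation_leaf_square_diff moments
    by (simp add: field_simps power2_eq_square power3_eq_cube power4_eq_xxxx)
qed

end
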